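(* Let $(M,F)$ be a conic pseudo-Finsler surface satisfying the $T$-condition, and $\overline F=e^\phi F$ an anisotropic conformal change. (a) If $\phi_{;2}$ depends only on $x$, then $\overline F$ satisfies the $T$-condition. (b) If $\sigma=(\phi_{;2})^2$ (equivalently $\rho=\varepsilon$), then $\overline F$ satisfies the $T$-condition if and only if $\phi_{;2;2}=0$.
   Context: Throughout, $M$ is a smooth $2$-dimensional manifold, $TM_0$ its slit tangent bundle with induced local coordinates $(x^i,y^i)$, $\partial_i=\partial/\partial x^i$, $\dot\partial_i=\partial/\partial y^i$. A function is called $h(r)$ if it is positively homogeneous of degree $r$ in $y$. A conic pseudo-Finsler surface $(M,F)$ consists of a conic subbundle $\mathcal A\subset TM_0$ (an open set invariant under $y\mapsto\lambda y$, $\lambda>0$, projecting onto $M$) and a smooth $h(1)$ function $F:\mathcal A\to\mathbb R$ such that $g_{ij}=\frac12\dot\partial_i\dot\partial_jF^2$ is nondegenerate. Put $\ell_i=\dot\partial_iF$, $\ell^i=y^i/F$. Modified Berwald frame: $\varepsilon\in\{1,-1\}$ and a covector $m_i$ satisfy $g_{ij}=\ell_i\ell_j+\varepsilon m_im_j$, $m^i=g^{ij}m_j$, so $\ell^i\ell_i=1$, $\ell^im_i=0$, $m^im_i=\varepsilon$. The main scalar $\mathcal I$ ($h(0)$) is defined by $FC_{ijk}=\mathcal I\,m_im_jm_k$, where $C_{ijk}=\frac14\dot\partial_i\dot\partial_j\dot\partial_kF^2$. For a smooth function $f$: $f_{;1}=y^i\dot\partial_if$, $f_{;2}=\varepsilon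 Fm^i\dot\partial_if$; iterated derivatives are read left to right, e.g. $f_{;2;2}=(f_{;2})_{;2}$. $F$ satisfies the $T$-condition if $\mathcal I_{;2}=0$ (equivalently $\mathcal I$ depends only on $x$). Anisotropic conformal change: $\phi$ is a smooth $h(0)$ function on $\mathcal A$ with $F^2(\dot\partial_i\dot\partial_j\phi+\dot\partial_i\phi\,\dot\partial_j\phi)m^im^j+\varepsilon\ne0$, and $\overline F=e^{\phi}F$. Set $\sigma=\phi_{;2;2}+\varepsilon\mathcal I\phi_{;2}+2(\phi_{;2})^2$, $\rho=1/(\sigma+\varepsilon-(\phi_{;2})^2)$ (with $\varepsilon\rho>0$). The main scalar of $\overline F$ is $\overline{\mathcal I}=\sqrt{\varepsilon\rho}[\mathcal I+2\varepsilon\phi_{;2}-\frac\varepsilon2(\ln\rho)_{;2}]$. $\overline F$ satisfies the $T$-condition iff $\overline{\mathcal I}$ depends only on $x$ (i.e. $\overline{\mathcal I}_{;2}=0$, the derivative taken with respect to $F$). *)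

theory Defs
  imports "HOL-Analysis.Analysis"
begin

text \<open>Local-coordinate setting.  A point of the slit tangent bundle over a chart
  is a pair (x,y) of vectors in R^2.  All notions below are local.\<close>

type_synonym pt = "(real^2) \<times> (real^2)"

fun Ck_on :: "nat \<Rightarrow> pt set \<Rightarrow> (pt \<Rightarrow> real) \<Rightarrow> bool" where
  "Ck_on 0 S f = continuous_on S f"
| "Ck_on (Suc n) S f = (f differentiable_on S \<and>
      (\<forall>v. Ck_on n S (\<lambda>p. frechet_derivative f (at p) v)))"

definition smooth_on :: "pt set \<Rightarrow> (pt \<Rightarrow> real) \<Rightarrow> bool" where
  "smooth_on S f = (\<forall>n. Ck_on n S f)"

definition vd :: "(pt \<Rightarrow> real) \<Rightarrow> pt \<Rightarrow> real^2 \<Rightarrow> real" where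
  "vd f p v = frechet_derivative f (at p) (0, v)"

definition hom_deg :: "pt set \<Rightarrow> real \<Rightarrow> (pt \<Rightarrow> real) \<Rightarrow> bool" where
  "hom_deg A r f = (\<forall>x y. (x, y) \<in> A \<longrightarrow>
      (\<forall>t::real. t > 0 \<longrightarrow> f (x, t *\<^sub>R y) = t powr r * f (x, y)))"

definition conic_subbundle :: "(real^2) set \<Rightarrow> pt set \<Rightarrow> bool" where
  "conic_subbundle U A = (open U \<and> open A \<and> A \<subseteq> U \<times> (UNIV - {0}) \<and>
      (\<forall>x y. (x, y) \<in> A \<longrightarrow> (\<forall>t::real. t > 0 \<longrightarrow> (x, t *\<^sub>R y) \<in> A)) \<and>
      (\<forall>x\<in>U. \<exists>y. (x, y) \<in> A))"

definition gF :: "(pt \<Rightarrow> real) \<Rightarrow> pt \<Rightarrow> real^2 \<Rightarrow> real^2 \<Rightarrow> real" where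
  "gF F p u v = 1/2 * vd (\<lambda>q. vd (\<lambda>r. (F r)\<^sup>2) q u) p v"

definition CF :: "(pt \<Rightarrow> real) \<Rightarrow> pt \<Rightarrow> real^2 \<Rightarrow> real^2 \<Rightarrow> real^2 \<Rightarrow> real" where
  "CF F p u v w = 1/4 * vd (\<lambda>q. vd (\<lambda>r. vd (\<lambda>s. (F s)\<^sup>2) r u) q v) p w"

definition pseudo_finsler :: "(real^2) set \<Rightarrow> pt set \<Rightarrow> (pt \<Rightarrow> real) \<Rightarrow> bool" where
  "pseudo_finsler U A F = (conic_subbundle U A \<and> smooth_on A F \<and> hom_deg A 1 F \<and>
      (\<forall>p\<in>A. \<forall>u. (\<forall>v. gF F p u v = 0) \<longrightarrow> u = 0))"

text \<open>Modified Berwald frame: the covector m_i is represented by the vector m p,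
  acting by the inner product; g_ij = l_i l_j + eps m_i m_j.\<close>
definition berwald_frame :: "pt set \<Rightarrow> (pt \<Rightarrow> real) \<Rightarrow> real \<Rightarrow> (pt \<Rightarrow> real^2) \<Rightarrow> bool" where
  "berwald_frame A F eps m = (eps \<in> {1, -1} \<and> (\<forall>u. smooth_on A (\<lambda>p. m p \<bullet> u)) \<and>
      (\<forall>p\<in>A. \<forall>u v. gF F p u v = vd F p u * vd F p v + eps * (m p \<bullet> u) * (m p \<bullet> v)))"

definition mup :: "(pt \<Rightarrow> real) \<Rightarrow> (pt \<Rightarrow> real^2) \<Rightarrow> pt \<Rightarrow> real^2" where
  "mup F m p = (THE w. \<forall>v. gF F p w v = m p \<bullet> v)"

definition main_scalar :: "(pt \<Rightarrow> real) \<Rightarrow> (pt \<Rightarrow> real^2) \<Rightarrow> pt \<Rightarrow> real" where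
  "main_scalar F m p = (THE c. \<forall>u v w.
      F p * CF F p u v w = c * (m p \<bullet> u) * (m p \<bullet> v) * (m p \<bullet> w))"

definition d2 :: "(pt \<Rightarrow> real) \<Rightarrow> real \<Rightarrow> (pt \<Rightarrow> real^2) \<Rightarrow> (pt \<Rightarrow> real) \<Rightarrow> pt \<Rightarrow> real" where
  "d2 F eps m f p = eps * F p * vd f p (mup F m p)"

definition T_condition :: "pt set \<Rightarrow> (pt \<Rightarrow> real) \<Rightarrow> real \<Rightarrow> (pt \<Rightarrow> real^2) \<Rightarrow> bool" where
  "T_condition A F eps m = (\<forall>p\<in>A. d2 F eps m (main_scalar F m) p = 0)"

definition sigma_cc :: "(pt \<Rightarrow> real) \<Rightarrow> real \<Rightarrow> (pt \<Rightarrow> real^2) \<Rightarrow> (pt \<Rightarrow> real) \<Rightarrow> pt \<Rightarrow> real" where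
  "sigma_cc F eps m \<phi> p = d2 F eps m (d2 F eps m \<phi>) p
      + eps * main_scalar F m p * d2 F eps m \<phi> p + 2 * (d2 F eps m \<phi> p)\<^sup>2"

definition rho_cc :: "(pt \<Rightarrow> real) \<Rightarrow> real \<Rightarrow> (pt \<Rightarrow> real^2) \<Rightarrow> (pt \<Rightarrow> real) \<Rightarrow> pt \<Rightarrow> real" where
  "rho_cc F eps m \<phi> p = 1 / (sigma_cc F eps m \<phi> p + eps - (d2 F eps m \<phi> p)\<^sup>2)"

definition conformal_change :: "pt set \<Rightarrow> (pt \<Rightarrow> real) \<Rightarrow> real \<Rightarrow> (pt \<Rightarrow> real^2) \<Rightarrow> (pt \<Rightarrow> real) \<Rightarrow> bool" where
  "conformal_change A F eps m \<phi> = (smooth_on A \<phi> \<and> hom_deg A 0 \<phi> \<and>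
      (\<forall>p\<in>A. (F p)\<^sup>2 * (vd (\<lambda>q. vd \<phi> q (mup F m p)) p (mup F m p)
                 + (vd \<phi> p (mup F m p))\<^sup>2) + eps \<noteq> 0) \<and>
      (\<forall>p\<in>A. eps * rho_cc F eps m \<phi> p > 0))"

text \<open>Main scalar of e^phi F (formula from the context); (ln rho) is written
  ln (eps rho) = ln |rho|, which has the same derivative.\<close>
definition main_scalar_cc :: "(pt \<Rightarrow> real) \<Rightarrow> real \<Rightarrow> (pt \<Rightarrow> real^2) \<Rightarrow> (pt \<Rightarrow> real) \<Rightarrow> pt \<Rightarrow> real" where
  "main_scalar_cc F eps m \<phi> p = sqrt (eps * rho_cc F eps m \<phi> p) *
      (main_scalar F m p + 2 * eps * d2 F eps m \<phi> p
       - eps / 2 * d2 F eps m (\<lambda>q. ln (eps * rho_cc F eps m \<phi> q)) p)"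

text \<open>e^phi F satisfies the T-condition iff its main scalar has vanishing ;2-derivative
  (taken with respect to F).\<close>
definition T_condition_cc :: "pt set \<Rightarrow> (pt \<Rightarrow> real) \<Rightarrow> real \<Rightarrow> (pt \<Rightarrow> real^2) \<Rightarrow> (pt \<Rightarrow> real) \<Rightarrow> bool" where
  "T_condition_cc A F eps m \<phi> = (\<forall>p\<in>A. d2 F eps m (main_scalar_cc F eps m \<phi>) p = 0)"

end

theory Submission
  imports Defs
begin

text \<open>Nondegeneracy of g makes \<ell> and m
  independent, which gives the explicit formula m^i = \<epsilon> J\<ell> / det(\<ell>, m), with J the
  rotation by a right angle; hence ;2 maps smooth functions to differentiable ones. The Cartan
  tensor is symmetric in its first two slots and annihilated by y in the last two (Euler's
  relation for the vertical derivatives of F^2, which are homogeneous of degrees 1 and 0); as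
  also m(y) = 0, it is a multiple of m \<otimes> m \<otimes> m. So the main scalar exists and equals
  F C(z,z,z) / m(z)^3 near any point where m(z) \<noteq> 0, for a fixed z; in particular it is
  differentiable.

  If \<phi>;2;2 = 0, then \<epsilon>\<rho> and the main scalar of e^\<phi> F are smooth functions of the pair
  (I, \<phi>;2), whose ;2-derivatives both vanish, so by the chain rule e^\<phi> F satisfies the
  T-condition; a function of x alone has vanishing ;2-derivative, which gives (a). If
  \<sigma> = (\<phi>;2)^2, then \<epsilon>\<rho> = 1 and the new main scalar is I + 2\<epsilon>\<phi>;2, whose
  ;2-derivative is 2\<epsilon>\<phi>;2;2, which gives (b).\<close>

lemma differentiable_transform_within_open:
  assumes "f differentiable (at p)" "open S" "p \<in> S" "\<And>q. q \<in> S \<Longrightarrow> f q = g q"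
  shows "g differentiable (at p)"
proof -
  from assms(1) obtain f' where "(f has_derivative f') (at p)"
    unfolding differentiable_def by blast
  then have "(g has_derivative f') (at p)"
    by (rule has_derivative_transform_within_open[OF _ assms(2,3)]) (rule assms(4))
  then show ?thesis by (rule differentiableI)
qed

lemma differentiable_sqrt_at:
  fixes f :: "'a::real_normed_vector \<Rightarrow> real"
  assumes "f differentiable (at x)" "f x > 0"
  shows "(\<lambda>z. sqrt (f z)) differentiable (at x)"
  using differentiable_compose[OF differentiableI
      [OF has_field_derivative_imp_has_derivative[OF DERIV_real_sqrt[OF assms(2)]]] assms(1)] .

lemma differentiable_ln_at:
  fixes f :: "'a::real_normed_vector \<Rightarrow> real"
  assumes "f differentiable (at x)" "f x > 0"
  shows "(\<lambda>z. ln (f z)) differentiable (at x)"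
  using differentiable_compose[OF differentiableI
      [OF has_field_derivative_imp_has_derivative[OF DERIV_ln[OF assms(2)]]] assms(1)] .

lemma frechet_derivative_add_at:
  fixes f g :: "'a::real_normed_vector \<Rightarrow> real"
  assumes "f differentiable (at p)" "g differentiable (at p)"
  shows "frechet_derivative (\<lambda>x. f x + g x) (at p) v
           = frechet_derivative f (at p) v + frechet_derivative g (at p) v"
proof -
  have "((\<lambda>x. f x + g x) has_derivative
      (\<lambda>v. frechet_derivative f (at p) v + frechet_derivative g (at p) v)) (at p)"
    using assms by (intro has_derivative_add) (simp_all add: frechet_derivative_works)
  then show ?thesis by (simp add: frechet_derivative_at[symmetric])
qed

lemma frechet_derivative_mult_at:
  fixes f g :: "'a::real_normed_vector \<Rightarrow> real"
  assumes "f differentiable (at p)" "g differentiable (at p)"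
  shows "frechet_derivative (\<lambda>x. f x * g x) (at p) v
           = f p * frechet_derivative g (at p) v + frechet_derivative f (at p) v * g p"
proof -
  have "((\<lambda>x. f x * g x) has_derivative
      (\<lambda>v. f p * frechet_derivative g (at p) v + frechet_derivative f (at p) v * g p)) (at p)"
    using assms by (intro has_derivative_mult) (simp_all add: frechet_derivative_works)
  then show ?thesis by (simp add: frechet_derivative_at[symmetric])
qed

lemma Ck_on_SucD:
  assumes "Ck_on (Suc n) S f"
  shows "f differentiable_on S" and "Ck_on n S (\<lambda>p. frechet_derivative f (at p) v)"
  using assms unfolding Ck_on.simps(2) by blast+

lemma Ck_on_Suc_imp_Ck_on: "Ck_on (Suc n) S f \<Longrightarrow> Ck_on n S f"
proof (induction n arbitrary: f)
  case 0
  then show ?case by (simp add: differentiable_imp_continuous_on)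
next
  case (Suc n)
  then show ?case
    unfolding Ck_on.simps(2) by blast
qed

lemma Ck_on_cong:
  assumes "open S" "\<And>x. x \<in> S \<Longrightarrow> f x = g x" "Ck_on n S f"
  shows "Ck_on n S g"
  using assms(2,3)
proof (induction n arbitrary: f g)
  case 0
  then show ?case using continuous_on_cong[of S S f g] by simp
next
  case (Suc n)
  have "f differentiable_on S"
    using Ck_on_SucD(1)[OF Suc.prems(2)] .
  then have f_diff: "f differentiable (at p)" if "p \<in> S" for p
    using differentiable_on_eq_differentiable_at[OF assms(1)] that by blast
  have "g differentiable_on S"
    using differentiable_transform_within_open[OF f_diff assms(1)] Suc.prems(1)
    by (simp add: differentiable_on_eq_differentiable_at[OF assms(1)])
  moreover have "Ck_on n S (\<lambda>p. frechet_derivative g (at p) v)" for v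
  proof (rule Suc.IH)
    show "Ck_on n S (\<lambda>p. frechet_derivative f (at p) v)"
      using Ck_on_SucD(2)[OF Suc.prems(2)] .
    show "frechet_derivative f (at p) v = frechet_derivative g (at p) v" if "p \<in> S" for p
      using frechet_derivative_transform_within_open[OF f_diff[OF that] assms(1) that] Suc.prems(1)
      by simp
  qed
  ultimately show ?case by simp
qed

lemma Ck_on_add:
  assumes "open S" "Ck_on n S f" "Ck_on n S g"
  shows "Ck_on n S (\<lambda>x. f x + g x :: real)"
  using assms(2,3)
proof (induction n arbitrary: f g)
  case 0
  then show ?case by (simp add: continuous_on_add)
next
  case (Suc n)
  have f_diff: "f differentiable_on S" and g_diff: "g differentiable_on S"
    using Suc.prems Ck_on_SucD(1) by blast+
  have "Ck_on n S (\<lambda>p. frechet_derivative (\<lambda>x. f x + g x) (at p) v)" for v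
  proof (rule Ck_on_cong[OF assms(1)])
    show "Ck_on n S (\<lambda>p. frechet_derivative f (at p) v + frechet_derivative g (at p) v)"
      by (rule Suc.IH; rule Ck_on_SucD(2); rule Suc.prems)
    show "frechet_derivative f (at p) v + frechet_derivative g (at p) v
            = frechet_derivative (\<lambda>x. f x + g x) (at p) v" if "p \<in> S" for p
      using f_diff g_diff that
      by (simp add: frechet_derivative_add_at differentiable_on_eq_differentiable_at[OF assms(1)])
  qed
  with differentiable_on_add[OF f_diff g_diff] show ?case
    unfolding Ck_on.simps(2) by blast
qed

lemma Ck_on_mult:
  assumes "open S" "Ck_on n S f" "Ck_on n S g"
  shows "Ck_on n S (\<lambda>x. f x * g x :: real)"
  using assms(2,3)
proof (induction n arbitrary: f g)
  case 0
  then show ?case by (simp add: continuous_on_mult)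
next
  case (Suc n)
  have f_diff: "f differentiable_on S" and g_diff: "g differentiable_on S"
    using Suc.prems Ck_on_SucD(1) by blast+
  have "Ck_on n S (\<lambda>p. frechet_derivative (\<lambda>x. f x * g x) (at p) v)" for v
  proof (rule Ck_on_cong[OF assms(1)])
    show "Ck_on n S (\<lambda>p. f p * frechet_derivative g (at p) v + frechet_derivative f (at p) v * g p)"
      by (rule Ck_on_add[OF assms(1)];
          rule Suc.IH; rule Ck_on_Suc_imp_Ck_on Ck_on_SucD(2); rule Suc.prems)
    show "f p * frechet_derivative g (at p) v + frechet_derivative f (at p) v * g p
            = frechet_derivative (\<lambda>x. f x * g x) (at p) v" if "p \<in> S" for p
      using f_diff g_diff that
      by (simp add: frechet_derivative_mult_at differentiable_on_eq_differentiable_at[OF assms(1)])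
  qed
  with differentiable_on_mult[OF f_diff g_diff] show ?case
    unfolding Ck_on.simps(2) by blast
qed

lemma smooth_on_mult:
  "open S \<Longrightarrow> smooth_on S f \<Longrightarrow> smooth_on S g \<Longrightarrow> smooth_on S (\<lambda>x. f x * g x :: real)"
  unfolding smooth_on_def using Ck_on_mult by blast

lemma smooth_on_vd: "smooth_on S f \<Longrightarrow> smooth_on S (\<lambda>p. vd f p u)"
  unfolding smooth_on_def vd_def using Ck_on_SucD(2) by blast

lemma smooth_on_imp_differentiable:
  "open S \<Longrightarrow> smooth_on S f \<Longrightarrow> p \<in> S \<Longrightarrow> f differentiable (at p)"
  unfolding smooth_on_def
  using Ck_on_SucD(1) differentiable_on_eq_differentiable_at by blast

lemma smooth_on_imp_continuous_on: "smooth_on S f \<Longrightarrow> continuous_on S f"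
  unfolding smooth_on_def using Ck_on.simps(1) by blast

lemma vd_eq_frechet_derivative_comp: "vd f p = frechet_derivative f (at p) \<circ> (\<lambda>v. (0, v))"
  by (simp add: vd_def fun_eq_iff)

lemma linear_vd: "f differentiable (at p) \<Longrightarrow> linear (vd f p)"
  unfolding vd_eq_frechet_derivative_comp
  by (intro linear_compose linear_frechet_derivative) (simp add: linear_iff)

lemma linear_axis_expansion:
  fixes L :: "real^2 \<Rightarrow> real"
  assumes "linear L"
  shows "L v = v$1 * L (axis 1 1) + v$2 * L (axis 2 1)"
proof -
  have "v = v$1 *\<^sub>R axis 1 1 + v$2 *\<^sub>R axis 2 1"
    by (simp add: vec_eq_iff forall_2 axis_def)
  then have "L v = L (v$1 *\<^sub>R axis 1 1 + v$2 *\<^sub>R axis 2 1)"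
    by (rule arg_cong)
  then show ?thesis
    by (simp add: linear_add[OF assms] linear_scale[OF assms])
qed

lemma vd_axis_expansion:
  "f differentiable (at p) \<Longrightarrow> vd f p v = v$1 * vd f p (axis 1 1) + v$2 * vd f p (axis 2 1)"
  by (rule linear_axis_expansion[OF linear_vd])

lemma vd_transform_within_open:
  assumes "f differentiable (at p)" "open S" "p \<in> S" "\<And>q. q \<in> S \<Longrightarrow> f q = g q"
  shows "vd g p = vd f p"
  using frechet_derivative_transform_within_open[OF assms] by (simp add: vd_def fun_eq_iff)

lemma vd_linear_combination:
  fixes f g h :: "pt \<Rightarrow> real"
  assumes "f differentiable (at p)" "g differentiable (at p)" "open S" "p \<in> S"
    and "\<And>q. q \<in> S \<Longrightarrow> h q = a * f q + b * g q"
  shows "vd h p v = a * vd f p v + b * vd g p v"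
proof -
  have "((\<lambda>q. a * f q + b * g q) has_derivative
      (\<lambda>d. a * frechet_derivative f (at p) d + b * frechet_derivative g (at p) d)) (at p)"
    using assms(1,2)
    by (intro has_derivative_add has_derivative_mult_right) (simp_all add: frechet_derivative_works)
  then have h_deriv: "(h has_derivative
      (\<lambda>d. a * frechet_derivative f (at p) d + b * frechet_derivative g (at p) d)) (at p)"
    by (rule has_derivative_transform_within_open[OF _ assms(3,4)]) (simp add: assms(5))
  then show ?thesis
    using fun_cong[OF frechet_derivative_at[OF h_deriv], of "(0, v)"] by (simp add: vd_def)
qed

lemma vd_self_eq_hom_deg:
  fixes f :: "pt \<Rightarrow> real"
  assumes "hom_deg A r f" "(x, y) \<in> A" "f differentiable (at (x, y))"
  shows "vd f (x, y) y = r * f (x, y)"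
proof -
  define \<gamma> where "\<gamma> = (\<lambda>t::real. (x, t *\<^sub>R y))"
  have "(\<gamma> has_derivative (\<lambda>s. (0, s *\<^sub>R y))) (at 1)"
    unfolding \<gamma>_def by (intro derivative_eq_intros) auto
  moreover have "(f has_derivative frechet_derivative f (at (x, y))) (at (\<gamma> 1))"
    using assms(3) by (simp add: \<gamma>_def frechet_derivative_works)
  ultimately have chain: "((f \<circ> \<gamma>) has_derivative
      (frechet_derivative f (at (x, y)) \<circ> (\<lambda>s. (0, s *\<^sub>R y)))) (at 1)"
    by (rule diff_chain_at)
  have "((\<lambda>t. t powr r * f (x, y)) has_real_derivative r * f (x, y)) (at 1)"
    by (auto intro!: derivative_eq_intros)
  then have "((\<lambda>t. t powr r * f (x, y)) has_derivative (\<lambda>s. r * f (x, y) * s)) (at 1)"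
    by (simp add: has_field_derivative_def)
  then have "((f \<circ> \<gamma>) has_derivative (\<lambda>s. r * f (x, y) * s)) (at 1)"
    by (rule has_derivative_transform_within_open[of _ _ _ _ "{0<..}"])
      (use assms(1,2) in \<open>auto simp: hom_deg_def \<gamma>_def\<close>)
  from has_derivative_unique[OF chain this, THEN fun_cong, of 1] show ?thesis
    by (simp add: vd_def)
qed

lemma hom_deg_vd:
  fixes f :: "pt \<Rightarrow> real"
  assumes "open A" "\<And>x y t. (x, y) \<in> A \<Longrightarrow> t > 0 \<Longrightarrow> (x, t *\<^sub>R y) \<in> A"
    and "hom_deg A r f" "\<And>q. q \<in> A \<Longrightarrow> f differentiable (at q)"
  shows "hom_deg A (r - 1) (\<lambda>q. vd f q u)"
  unfolding hom_deg_def
proof (intro allI impI)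
  fix x y and t :: real
  assume xy: "(x, y) \<in> A" and t: "t > 0"
  define S where "S = (\<lambda>q::pt. (fst q, t *\<^sub>R snd q))"
  have txy: "(x, t *\<^sub>R y) \<in> A" using assms(2) xy t .
  have "(S has_derivative S) (at (x, y))"
    unfolding S_def by (intro derivative_eq_intros) auto
  moreover have "(f has_derivative frechet_derivative f (at (x, t *\<^sub>R y))) (at (S (x, y)))"
    using assms(4)[OF txy] by (simp add: S_def frechet_derivative_works)
  ultimately have chain:
    "((f \<circ> S) has_derivative (frechet_derivative f (at (x, t *\<^sub>R y)) \<circ> S)) (at (x, y))"
    by (rule diff_chain_at)
  have "((\<lambda>q. t powr r * f q) has_derivative
      (\<lambda>h. t powr r * frechet_derivative f (at (x, y)) h)) (at (x, y))"
    using assms(4)[OF xy] by (intro has_derivative_mult_right) (simp add: frechet_derivative_works)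
  then have "((f \<circ> S) has_derivative
      (\<lambda>h. t powr r * frechet_derivative f (at (x, y)) h)) (at (x, y))"
    by (rule has_derivative_transform_within_open[OF _ assms(1) xy])
      (use assms(3) t in \<open>auto simp: hom_deg_def S_def\<close>)
  from has_derivative_unique[OF chain this, THEN fun_cong, of "(0, u)"]
  have "vd f (x, t *\<^sub>R y) (t *\<^sub>R u) = t powr r * vd f (x, y) u"
    by (simp add: S_def vd_def)
  then have "t * vd f (x, t *\<^sub>R y) u = t powr r * vd f (x, y) u"
    by (simp add: linear_scale[OF linear_vd[OF assms(4)[OF txy]]])
  then show "vd f (x, t *\<^sub>R y) u = t powr (r - 1) * vd f (x, y) u"
    using t by (simp add: powr_diff field_simps)
qed

lemma vd_eq_0_if_fibrewise_const:
  fixes h :: "pt \<Rightarrow> real"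
  assumes "open A" "p \<in> A" "h differentiable (at p)" "\<And>q. q \<in> A \<Longrightarrow> h q = h0 (fst q)"
  shows "vd h p v = 0"
proof -
  define \<gamma> where "\<gamma> = (\<lambda>t::real. p + t *\<^sub>R (0, v))"
  have "(\<gamma> has_derivative (\<lambda>s. s *\<^sub>R (0, v))) (at 0)"
    unfolding \<gamma>_def by (intro derivative_eq_intros) auto
  moreover have "(h has_derivative frechet_derivative h (at p)) (at (\<gamma> 0))"
    using assms(3) by (simp add: \<gamma>_def frechet_derivative_works zero_prod_def[symmetric])
  ultimately have chain:
    "((h \<circ> \<gamma>) has_derivative (frechet_derivative h (at p) \<circ> (\<lambda>s. s *\<^sub>R (0, v)))) (at 0)"
    by (rule diff_chain_at)
  have "open (\<gamma> -` A)"
    unfolding \<gamma>_def by (intro open_vimage assms(1) continuous_intros)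
  then have "((h \<circ> \<gamma>) has_derivative (\<lambda>s. 0)) (at 0)"
    by (rule has_derivative_transform_within_open[OF has_derivative_const[of "h0 (fst p)"]])
      (use assms(2,4) in \<open>auto simp: \<gamma>_def zero_prod_def[symmetric]\<close>)
  from has_derivative_unique[OF chain this, THEN fun_cong, of 1] show ?thesis
    by (simp add: vd_def)
qed

lemma vd_compose_pair_eq_0:
  fixes f g h :: "pt \<Rightarrow> real" and K :: "real \<times> real \<Rightarrow> real"
  assumes "f differentiable (at p)" "g differentiable (at p)" "K differentiable (at (f p, g p))"
    and "open S" "p \<in> S" "\<And>q. q \<in> S \<Longrightarrow> h q = K (f q, g q)"
    and "vd f p v = 0" "vd g p v = 0"
  shows "vd h p v = 0"
proof -
  have pair_deriv: "((\<lambda>q. (f q, g q)) has_derivative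
      (\<lambda>d. (frechet_derivative f (at p) d, frechet_derivative g (at p) d))) (at p)"
    using assms(1,2) by (intro has_derivative_Pair) (simp_all add: frechet_derivative_works)
  have "frechet_derivative (K \<circ> (\<lambda>q. (f q, g q))) (at p)
      = frechet_derivative K (at (f p, g p)) \<circ> frechet_derivative (\<lambda>q. (f q, g q)) (at p)"
    using differentiableI[OF pair_deriv] assms(3) by (simp add: frechet_derivative_compose)
  moreover have "frechet_derivative (\<lambda>q. (f q, g q)) (at p) (0, v) = 0"
    using fun_cong[OF frechet_derivative_at[OF pair_deriv], of "(0, v)"] assms(7,8)
    by (simp add: vd_def zero_prod_def)
  moreover have "K \<circ> (\<lambda>q. (f q, g q)) differentiable (at p)"
    using differentiableI[OF pair_deriv] assms(3) by (simp add: differentiable_chain_at)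
  ultimately show ?thesis
    using vd_transform_within_open[of "K \<circ> (\<lambda>q. (f q, g q))" p S h] assms(4-6)
      linear_0[OF linear_frechet_derivative[OF assms(3)]]
    by (simp add: vd_def fun_eq_iff)
qed

definition rot90 :: "real^2 \<Rightarrow> real^2" where
  "rot90 y = vector [- y$2, y$1]"

lemma inner_real2: "(a::real^2) \<bullet> b = a$1 * b$1 + a$2 * b$2"
  by (simp add: inner_vec_def sum_2)

lemma inner_rot90_self [simp]: "y \<bullet> rot90 y = 0"
  by (simp add: rot90_def inner_real2)

lemma rot90_decomposition:
  assumes "y \<noteq> 0"
  shows "v = (v \<bullet> y / (y \<bullet> y)) *\<^sub>R y + (v \<bullet> rot90 y / (y \<bullet> y)) *\<^sub>R rot90 y"
proof -
  have "(y \<bullet> y) *\<^sub>R v = (v \<bullet> y) *\<^sub>R y + (v \<bullet> rot90 y) *\<^sub>R rot90 y"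
    by (simp add: vec_eq_iff forall_2 rot90_def inner_real2 algebra_simps)
  moreover have "v = inverse (y \<bullet> y) *\<^sub>R ((y \<bullet> y) *\<^sub>R v)"
    using assms by simp
  ultimately show ?thesis
    by (simp add: scaleR_add_right divide_inverse mult.commute)
qed

lemma linear_eq_rot90_coord:
  fixes L :: "real^2 \<Rightarrow> real"
  assumes "linear L" "y \<noteq> 0" "L y = 0"
  shows "L v = v \<bullet> rot90 y / (y \<bullet> y) * L (rot90 y)"
proof -
  have "L v = L ((v \<bullet> y / (y \<bullet> y)) *\<^sub>R y + (v \<bullet> rot90 y / (y \<bullet> y)) *\<^sub>R rot90 y)"
    using rot90_decomposition[OF assms(2), of v] by (rule arg_cong)
  then show ?thesis
    by (simp add: linear_add[OF assms(1)] linear_scale[OF assms(1)] assms(3))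
qed

lemma exists_orthogonal_to_both:
  fixes a b :: "real^2"
  assumes "a \<bullet> rot90 b = 0"
  shows "\<exists>u. u \<noteq> 0 \<and> a \<bullet> u = 0 \<and> b \<bullet> u = 0"
proof (cases "b = 0")
  case False
  then have "rot90 b \<noteq> 0" by (auto simp: rot90_def vec_eq_iff forall_2)
  with assms show ?thesis by auto
next
  case b: True
  show ?thesis
  proof (cases "a = 0")
    case False
    then have "rot90 a \<noteq> 0" by (auto simp: rot90_def vec_eq_iff forall_2)
    with b show ?thesis by (intro exI[of _ "rot90 a"]) simp
  next
    case True
    with b show ?thesis by (intro exI[of _ "axis 1 1"]) (simp add: axis_eq_0_iff)
  qed
qed

locale berwald_surface =
  fixes U :: "(real^2) set" and A :: "pt set" and F :: "pt \<Rightarrow> real"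
    and eps :: real and m :: "pt \<Rightarrow> real^2"
  assumes pseudo_finsler: "pseudo_finsler U A F"
    and berwald_frame: "berwald_frame A F eps m"
begin

lemma open_A: "open A"
  and A_subset: "A \<subseteq> U \<times> (UNIV - {0})"
  and scaleR_fibre_mem_A: "(x, y) \<in> A \<Longrightarrow> t > 0 \<Longrightarrow> (x, t *\<^sub>R y) \<in> A"
  using pseudo_finsler unfolding pseudo_finsler_def conic_subbundle_def by blast+

lemma fibre_nonzero: "(x, y) \<in> A \<Longrightarrow> y \<noteq> 0"
  using A_subset by blast

lemma smooth_F: "smooth_on A F" and hom_deg_F: "hom_deg A 1 F"
  using pseudo_finsler by (simp_all add: pseudo_finsler_def)

lemma gF_nondegenerate: "q \<in> A \<Longrightarrow> (\<And>v. gF F q u v = 0) \<Longrightarrow> u = 0"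
  using pseudo_finsler unfolding pseudo_finsler_def by blast

lemma eps_cases: "eps = 1 \<or> eps = -1"
  using berwald_frame by (simp add: berwald_frame_def)

lemma eps_square: "eps * eps = 1" and eps_nonzero: "eps \<noteq> 0"
  using eps_cases by auto

lemma smooth_inner_m: "smooth_on A (\<lambda>q. m q \<bullet> u)"
  using berwald_frame by (simp add: berwald_frame_def)

lemma gF_frame: "q \<in> A \<Longrightarrow> gF F q u v = vd F q u * vd F q v + eps * (m q \<bullet> u) * (m q \<bullet> v)"
  using berwald_frame by (simp add: berwald_frame_def)

lemma differentiable_if_smooth: "smooth_on A f \<Longrightarrow> q \<in> A \<Longrightarrow> f differentiable (at q)"
  using smooth_on_imp_differentiable[OF open_A] .

definition ell :: "pt \<Rightarrow> real^2" where
  "ell q = (\<chi> i. vd F q (axis i 1))"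

lemma vd_F_eq_inner_ell: "q \<in> A \<Longrightarrow> vd F q v = ell q \<bullet> v"
  using vd_axis_expansion[OF differentiable_if_smooth[OF smooth_F], of q v]
  by (simp add: ell_def inner_real2 mult.commute)

definition frame_det :: "pt \<Rightarrow> real" where
  "frame_det q = m q \<bullet> rot90 (ell q)"

lemma frame_det_nonzero:
  assumes "q \<in> A"
  shows "frame_det q \<noteq> 0"
proof
  assume "frame_det q = 0"
  then obtain u where u: "u \<noteq> 0" "m q \<bullet> u = 0" "ell q \<bullet> u = 0"
    using exists_orthogonal_to_both unfolding frame_det_def by blast
  then have "gF F q u v = 0" for v
    by (simp add: gF_frame[OF assms] vd_F_eq_inner_ell[OF assms])
  with u show False using gF_nondegenerate[OF assms] by blast
qed

lemma mup_eq:
  assumes "q \<in> A"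
  shows "mup F m q = (eps / frame_det q) *\<^sub>R rot90 (ell q)"
  unfolding mup_def
proof (rule the_equality)
  let ?w = "(eps / frame_det q) *\<^sub>R rot90 (ell q)"
  have gF_w: "gF F q ?w v = m q \<bullet> v" for v
    using frame_det_nonzero[OF assms] eps_square
    by (simp add: gF_frame[OF assms] vd_F_eq_inner_ell[OF assms] frame_det_def)
  then show "\<forall>v. gF F q ?w v = m q \<bullet> v" by blast
  fix w
  assume w: "\<forall>v. gF F q w v = m q \<bullet> v"
  have "gF F q (w - ?w) v = 0" for v
    using w gF_w[of v]
    by (simp add: gF_frame[OF assms] vd_F_eq_inner_ell[OF assms] inner_diff_right algebra_simps)
  then show "w = ?w"
    using gF_nondegenerate[OF assms] by fastforce
qed

lemma d2_eq:
  assumes "q \<in> A" "f differentiable (at q)"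
  shows "d2 F eps m f q = F q / frame_det q * vd f q (rot90 (ell q))"
proof -
  have "d2 F eps m f q = (eps * eps) * (F q / frame_det q * vd f q (rot90 (ell q)))"
    by (simp add: d2_def mup_eq[OF assms(1)] linear_scale[OF linear_vd[OF assms(2)]])
  then show ?thesis by (simp add: eps_square)
qed

lemma d2_differentiable:
  assumes "smooth_on A f" "p \<in> A"
  shows "d2 F eps m f differentiable (at p)"
proof -
  have vd_axis_diff: "(\<lambda>q. vd g q (axis i 1)) differentiable (at p)" if "smooth_on A g" for g i
    by (rule differentiable_if_smooth[OF smooth_on_vd[OF that] assms(2)])
  have m_nth_diff: "(\<lambda>q. m q $ i) differentiable (at p)" for i
    using differentiable_if_smooth[OF smooth_inner_m assms(2), of "axis i 1"] by (simp add: inner_axis)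
  let ?det = "\<lambda>q. m q $ 2 * vd F q (axis 1 1) - m q $ 1 * vd F q (axis 2 1)"
  have det_eq: "frame_det q = ?det q" for q
    by (simp add: frame_det_def rot90_def ell_def inner_real2)
  have eq: "d2 F eps m f q = F q / ?det q
      * (vd F q (axis 1 1) * vd f q (axis 2 1) - vd F q (axis 2 1) * vd f q (axis 1 1))"
    if "q \<in> A" for q
  proof -
    have "vd f q (rot90 (ell q))
        = vd F q (axis 1 1) * vd f q (axis 2 1) - vd F q (axis 2 1) * vd f q (axis 1 1)"
      using vd_axis_expansion[OF differentiable_if_smooth[OF assms(1) that], of "rot90 (ell q)"]
      by (simp add: rot90_def ell_def algebra_simps)
    then show ?thesis
      using d2_eq[OF that differentiable_if_smooth[OF assms(1) that]] det_eq[of q] by simp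
  qed
  have "(\<lambda>q. F q / ?det q
      * (vd F q (axis 1 1) * vd f q (axis 2 1) - vd F q (axis 2 1) * vd f q (axis 1 1)))
      differentiable (at p)"
    using frame_det_nonzero[OF assms(2)] det_eq[of p]
    by (intro differentiable_mult differentiable_divide differentiable_diff m_nth_diff
        vd_axis_diff smooth_F assms(1) differentiable_if_smooth[OF smooth_F assms(2)]) auto
  then show ?thesis
    by (rule differentiable_transform_within_open[OF _ open_A assms(2)]) (simp add: eq)
qed

definition dFsq :: "real^2 \<Rightarrow> pt \<Rightarrow> real" where
  "dFsq u = (\<lambda>r. vd (\<lambda>s. (F s)\<^sup>2) r u)"

definition ddFsq :: "real^2 \<Rightarrow> real^2 \<Rightarrow> pt \<Rightarrow> real" where
  "ddFsq u v = (\<lambda>q. vd (dFsq u) q v)"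

lemma gF_eq_ddFsq: "gF F q u v = ddFsq u v q / 2"
  by (simp add: gF_def ddFsq_def dFsq_def)

lemma CF_eq_vd_ddFsq: "CF F q u v w = vd (ddFsq u v) q w / 4"
  by (simp add: CF_def ddFsq_def dFsq_def)

lemma smooth_Fsq: "smooth_on A (\<lambda>s. (F s)\<^sup>2)"
  using smooth_on_mult[OF open_A smooth_F smooth_F] by (simp add: power2_eq_square)

lemma smooth_dFsq: "smooth_on A (dFsq u)"
  unfolding dFsq_def by (rule smooth_on_vd[OF smooth_Fsq])

lemma smooth_ddFsq: "smooth_on A (ddFsq u v)"
  unfolding ddFsq_def by (rule smooth_on_vd[OF smooth_dFsq])

lemma hom_deg_Fsq: "hom_deg A 2 (\<lambda>s. (F s)\<^sup>2)"
  unfolding hom_deg_def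
proof (intro allI impI)
  fix x y and t :: real
  assume "(x, y) \<in> A" "t > 0"
  then show "(F (x, t *\<^sub>R y))\<^sup>2 = t powr 2 * (F (x, y))\<^sup>2"
    using hom_deg_F by (simp add: hom_deg_def power_mult_distrib)
qed

lemma hom_deg_dFsq: "hom_deg A 1 (dFsq u)"
  using hom_deg_vd[OF open_A scaleR_fibre_mem_A hom_deg_Fsq differentiable_if_smooth[OF smooth_Fsq]]
  by (simp add: dFsq_def)

lemma hom_deg_ddFsq: "hom_deg A 0 (ddFsq u v)"
  using hom_deg_vd[OF open_A scaleR_fibre_mem_A hom_deg_dFsq differentiable_if_smooth[OF smooth_dFsq]]
  by (simp add: ddFsq_def)

lemma vd_F_fibre: "(x, y) \<in> A \<Longrightarrow> vd F (x, y) y = F (x, y)"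
  using vd_self_eq_hom_deg[OF hom_deg_F _ differentiable_if_smooth[OF smooth_F]] by simp

lemma dFsq_fibre: "(x, y) \<in> A \<Longrightarrow> dFsq y (x, y) = 2 * (F (x, y))\<^sup>2"
  using vd_self_eq_hom_deg[OF hom_deg_Fsq _ differentiable_if_smooth[OF smooth_Fsq]]
  by (simp add: dFsq_def)

lemma ddFsq_fibre: "(x, y) \<in> A \<Longrightarrow> ddFsq u y (x, y) = dFsq u (x, y)"
  using vd_self_eq_hom_deg[OF hom_deg_dFsq _ differentiable_if_smooth[OF smooth_dFsq]]
  by (simp add: ddFsq_def)

lemma vd_ddFsq_fibre: "(x, y) \<in> A \<Longrightarrow> vd (ddFsq u v) (x, y) y = 0"
  using vd_self_eq_hom_deg[OF hom_deg_ddFsq _ differentiable_if_smooth[OF smooth_ddFsq]] by simp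

lemma inner_m_fibre:
  assumes "(x, y) \<in> A"
  shows "m (x, y) \<bullet> y = 0"
proof -
  have "gF F (x, y) y y = (F (x, y))\<^sup>2"
    using ddFsq_fibre[OF assms] dFsq_fibre[OF assms] by (simp add: gF_eq_ddFsq)
  then have "eps * (m (x, y) \<bullet> y)\<^sup>2 = 0"
    using gF_frame[OF assms, of y y] vd_F_fibre[OF assms] by (simp add: power2_eq_square)
  then show ?thesis
    using eps_nonzero by simp
qed

lemma ddFsq_commute: "q \<in> A \<Longrightarrow> ddFsq u v q = ddFsq v u q"
  using gF_frame[of q u v] gF_frame[of q v u] by (simp add: gF_eq_ddFsq)

lemma vd_ddFsq_commute:
  assumes "q \<in> A"
  shows "vd (ddFsq u v) q w = vd (ddFsq v u) q w"
  using vd_transform_within_open[OF differentiable_if_smooth[OF smooth_ddFsq[of v u] assms]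
      open_A assms, where g = "ddFsq u v"] ddFsq_commute
  by simp

lemma ddFsq_linear_combination:
  "q \<in> A \<Longrightarrow> ddFsq u (a *\<^sub>R v + b *\<^sub>R v') q = a * ddFsq u v q + b * ddFsq u v' q"
  using linear_vd[OF differentiable_if_smooth[OF smooth_dFsq]]
  by (simp add: ddFsq_def linear_add linear_scale)

lemma linear_vd_ddFsq_slot2:
  assumes "q \<in> A"
  shows "linear (\<lambda>v. vd (ddFsq u v) q w)"
proof -
  have combination: "vd (ddFsq u (a *\<^sub>R v + b *\<^sub>R v')) q w
      = a * vd (ddFsq u v) q w + b * vd (ddFsq u v') q w" for a b v v'
    using vd_linear_combination[OF differentiable_if_smooth[OF smooth_ddFsq assms]
        differentiable_if_smooth[OF smooth_ddFsq assms] open_A assms]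
      ddFsq_linear_combination by blast
  show ?thesis
  proof (rule linearI)
    show "vd (ddFsq u (v + v')) q w = vd (ddFsq u v) q w + vd (ddFsq u v') q w" for v v'
      using combination[of 1 v 1 v'] by simp
    show "vd (ddFsq u (c *\<^sub>R v)) q w = c *\<^sub>R vd (ddFsq u v) q w" for c v
      using combination[of c v 0 v] by simp
  qed
qed

lemma vd_ddFsq_fibre_slot2:
  assumes xy: "(x, y) \<in> A"
  shows "vd (ddFsq u y) (x, y) w = 0"
proof -
  let ?H1 = "ddFsq u (axis 1 1)" and ?H2 = "ddFsq u (axis 2 1)"
  have H1_diff: "?H1 differentiable (at (x, y))" and H2_diff: "?H2 differentiable (at (x, y))"
    using differentiable_if_smooth[OF smooth_ddFsq xy] by blast+
  \<comment> \<open>Differentiate the Euler identity \<open>dFsq u r = ddFsq u (snd r) r\<close> along the fibre.\<close>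
  have euler: "dFsq u r = snd r $ 1 * ?H1 r + snd r $ 2 * ?H2 r" if "r \<in> A" for r
  proof -
    obtain a b where r: "r = (a, b)" by fastforce
    have "dFsq u r = vd (dFsq u) r b"
      using ddFsq_fibre[of a b u] that r by (simp add: ddFsq_def)
    then show ?thesis
      using vd_axis_expansion[OF differentiable_if_smooth[OF smooth_dFsq[of u] that], of b]
      by (simp add: r ddFsq_def)
  qed
  have nth_snd: "((\<lambda>r::pt. snd r $ i) has_derivative (\<lambda>d. snd d $ i)) (at (x, y))" for i
    by (rule bounded_linear.has_derivative[OF bounded_linear_vec_nth
          has_derivative_snd[OF has_derivative_ident]])
  have "((\<lambda>r. snd r $ 1 * ?H1 r + snd r $ 2 * ?H2 r) has_derivative
      (\<lambda>d. (y $ 1 * frechet_derivative ?H1 (at (x, y)) d + snd d $ 1 * ?H1 (x, y))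
         + (y $ 2 * frechet_derivative ?H2 (at (x, y)) d + snd d $ 2 * ?H2 (x, y)))) (at (x, y))"
    using has_derivative_add
        [OF has_derivative_mult[OF nth_snd H1_diff[unfolded frechet_derivative_works]]
          has_derivative_mult[OF nth_snd H2_diff[unfolded frechet_derivative_works]]]
    by simp
  then have "(dFsq u has_derivative
      (\<lambda>d. (y $ 1 * frechet_derivative ?H1 (at (x, y)) d + snd d $ 1 * ?H1 (x, y))
         + (y $ 2 * frechet_derivative ?H2 (at (x, y)) d + snd d $ 2 * ?H2 (x, y)))) (at (x, y))"
    by (rule has_derivative_transform_within_open[OF _ open_A xy]) (simp add: euler)
  from fun_cong[OF frechet_derivative_at[OF this], of "(0, w)"]
  have "ddFsq u w (x, y)
      = y $ 1 * vd ?H1 (x, y) w + w $ 1 * ?H1 (x, y) + (y $ 2 * vd ?H2 (x, y) w + w $ 2 * ?H2 (x, y))"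
    by (simp add: vd_def ddFsq_def)
  moreover have "ddFsq u w (x, y) = w $ 1 * ?H1 (x, y) + w $ 2 * ?H2 (x, y)"
    using vd_axis_expansion[OF differentiable_if_smooth[OF smooth_dFsq[of u] xy], of w]
    by (simp add: ddFsq_def)
  moreover have "vd (ddFsq u y) (x, y) w = y $ 1 * vd ?H1 (x, y) w + y $ 2 * vd ?H2 (x, y) w"
    by (rule linear_axis_expansion[OF linear_vd_ddFsq_slot2[OF xy]])
  ultimately show ?thesis by simp
qed

lemma vd_ddFsq_eq:
  assumes xy: "(x, y) \<in> A"
  shows "vd (ddFsq u v) (x, y) w = (u \<bullet> rot90 y) * (v \<bullet> rot90 y) * (w \<bullet> rot90 y) / (y \<bullet> y)^3
           * vd (ddFsq (rot90 y) (rot90 y)) (x, y) (rot90 y)"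
proof -
  define z where "z = rot90 y"
  have y: "y \<noteq> 0" using fibre_nonzero[OF xy] .
  have slot3: "vd (ddFsq u' v') (x, y) w' = w' \<bullet> z / (y \<bullet> y) * vd (ddFsq u' v') (x, y) z" for u' v' w'
    unfolding z_def
    by (rule linear_eq_rot90_coord[OF linear_vd[OF differentiable_if_smooth[OF smooth_ddFsq xy]] y
          vd_ddFsq_fibre[OF xy]])
  have slot2: "vd (ddFsq u' v') (x, y) z = v' \<bullet> z / (y \<bullet> y) * vd (ddFsq u' z) (x, y) z" for u' v'
    unfolding z_def
    by (rule linear_eq_rot90_coord[OF linear_vd_ddFsq_slot2[OF xy] y vd_ddFsq_fibre_slot2[OF xy]])
  have "vd (ddFsq u z) (x, y) z = u \<bullet> z / (y \<bullet> y) * vd (ddFsq z z) (x, y) z"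
    using vd_ddFsq_commute[OF xy, of u z z] slot2[of z u] by simp
  then have "vd (ddFsq u v) (x, y) w
      = w \<bullet> z / (y \<bullet> y) * (v \<bullet> z / (y \<bullet> y) * (u \<bullet> z / (y \<bullet> y) * vd (ddFsq z z) (x, y) z))"
    using slot3[of u v w] slot2[of u v] by simp
  then show ?thesis
    by (simp add: z_def power3_eq_cube ac_simps)
qed

lemma inner_m_eq:
  assumes "(x, y) \<in> A"
  shows "m (x, y) \<bullet> v = v \<bullet> rot90 y / (y \<bullet> y) * (m (x, y) \<bullet> rot90 y)"
  using linear_eq_rot90_coord[OF bounded_linear.linear[OF bounded_linear_inner_right]
      fibre_nonzero[OF assms] inner_m_fibre[OF assms]] .

lemma m_nonzero:
  assumes "q \<in> A"
  shows "m q \<noteq> 0"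
  using frame_det_nonzero[OF assms] by (auto simp: frame_det_def)

lemma inner_m_rot90_nonzero:
  assumes "(x, y) \<in> A"
  shows "m (x, y) \<bullet> rot90 y \<noteq> 0"
proof
  assume "m (x, y) \<bullet> rot90 y = 0"
  then have "m (x, y) \<bullet> m (x, y) = 0"
    using inner_m_eq[OF assms, of "m (x, y)"] by simp
  with m_nonzero[OF assms] show False by simp
qed

lemma main_scalar_eqI:
  assumes "q \<in> A" "\<And>u v w. F q * CF F q u v w = c * (m q \<bullet> u) * (m q \<bullet> v) * (m q \<bullet> w)"
  shows "main_scalar F m q = c"
  unfolding main_scalar_def
proof (rule the_equality)
  show "\<forall>u v w. F q * CF F q u v w = c * (m q \<bullet> u) * (m q \<bullet> v) * (m q \<bullet> w)"
    using assms(2) by blast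
  fix c'
  assume "\<forall>u v w. F q * CF F q u v w = c' * (m q \<bullet> u) * (m q \<bullet> v) * (m q \<bullet> w)"
  then have "c' * (m q \<bullet> m q)^3 = c * (m q \<bullet> m q)^3"
    using assms(2)[of "m q" "m q" "m q"] by (simp add: power3_eq_cube mult.assoc)
  then show "c' = c"
    using m_nonzero[OF assms(1)] by simp
qed

lemma Cartan_tensor_factorization:
  assumes "q \<in> A"
  shows "F q * CF F q u v w = main_scalar F m q * (m q \<bullet> u) * (m q \<bullet> v) * (m q \<bullet> w)"
proof -
  obtain x y where q: "q = (x, y)" by fastforce
  define z where "z = rot90 y"
  define T where "T = vd (ddFsq z z) q z"
  define c where "c = F q * T / 4 / (m q \<bullet> z)^3"
  have xy: "(x, y) \<in> A" using assms q by simp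
  have k: "m q \<bullet> z \<noteq> 0" and yy: "y \<bullet> y \<noteq> 0"
    using inner_m_rot90_nonzero[OF xy] fibre_nonzero[OF xy] by (simp_all add: q z_def)
  have factorization: "F q * CF F q u' v' w' = c * (m q \<bullet> u') * (m q \<bullet> v') * (m q \<bullet> w')" for u' v' w'
  proof -
    have "F q * CF F q u' v' w' = F q * ((u' \<bullet> z) * (v' \<bullet> z) * (w' \<bullet> z) / (y \<bullet> y)^3 * T) / 4"
      by (simp add: CF_eq_vd_ddFsq q vd_ddFsq_eq[OF xy, of u' v' w'] z_def T_def)
    also have "\<dots> = c * (m q \<bullet> u') * (m q \<bullet> v') * (m q \<bullet> w')"
      using k yy
      by (simp add: q inner_m_eq[OF xy, of u'] inner_m_eq[OF xy, of v'] inner_m_eq[OF xy, of w']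
          c_def z_def[symmetric] field_simps power3_eq_cube)
    finally show ?thesis .
  qed
  moreover have "main_scalar F m q = c"
    by (rule main_scalar_eqI[OF assms factorization])
  ultimately show ?thesis
    by simp
qed

lemma main_scalar_eq:
  assumes "q \<in> A" "m q \<bullet> z \<noteq> 0"
  shows "main_scalar F m q = F q * CF F q z z z / (m q \<bullet> z)^3"
  using Cartan_tensor_factorization[OF assms(1), of z z z] assms(2)
  by (simp add: power3_eq_cube)

lemma differentiable_main_scalar:
  assumes p: "p \<in> A"
  shows "main_scalar F m differentiable (at p)"
proof -
  define z where "z = rot90 (snd p)"
  define N where "N = A \<inter> (\<lambda>q. m q \<bullet> z) -` (- {0})"
  have N_open: "open N"
    unfolding N_def
    by (rule continuous_open_preimage[OF smooth_on_imp_continuous_on[OF smooth_inner_m] open_A]) auto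
  have pN: "p \<in> N" and mz: "m p \<bullet> z \<noteq> 0"
    using inner_m_rot90_nonzero[of "fst p" "snd p"] p by (simp_all add: N_def z_def)
  have "(\<lambda>q. F q * CF F q z z z / (m q \<bullet> z)^3) differentiable (at p)"
    unfolding CF_eq_vd_ddFsq using mz
    by (intro differentiable_mult differentiable_divide differentiable_power differentiable_const
        differentiable_if_smooth[OF _ p] smooth_F smooth_on_vd smooth_ddFsq smooth_inner_m) auto
  then show ?thesis
    by (rule differentiable_transform_within_open[OF _ N_open pN])
      (auto simp: N_def main_scalar_eq[of _ z])
qed

lemma d2_eq_0_iff: "d2 F eps m f q = 0 \<longleftrightarrow> F q = 0 \<or> vd f q (mup F m q) = 0"
  using eps_nonzero by (simp add: d2_def)

lemma d2_compose_pair_eq_0: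
  fixes f g h :: "pt \<Rightarrow> real" and K :: "real \<times> real \<Rightarrow> real"
  assumes "q \<in> A" "f differentiable (at q)" "g differentiable (at q)"
    and "K differentiable (at (f q, g q))" "\<And>r. r \<in> A \<Longrightarrow> h r = K (f r, g r)"
    and "d2 F eps m f q = 0" "d2 F eps m g q = 0"
  shows "d2 F eps m h q = 0"
  using assms(6,7) vd_compose_pair_eq_0[OF assms(2-4) open_A assms(1,5)]
  by (auto simp: d2_eq_0_iff)

lemma d2_linear_combination:
  assumes "q \<in> A" "f differentiable (at q)" "g differentiable (at q)"
    and "\<And>r. r \<in> A \<Longrightarrow> h r = a * f r + b * g r"
  shows "d2 F eps m h q = a * d2 F eps m f q + b * d2 F eps m g q"
  using vd_linear_combination[OF assms(2,3) open_A assms(1,4)]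
  by (simp add: d2_def algebra_simps)

lemma eps_rho_cc_eq:
  assumes "d2 F eps m (d2 F eps m \<phi>) q = 0"
  shows "eps * rho_cc F eps m \<phi> q
           = eps / (eps * main_scalar F m q * d2 F eps m \<phi> q + (d2 F eps m \<phi> q)\<^sup>2 + eps)"
  using assms by (simp add: rho_cc_def sigma_cc_def power2_eq_square)

lemma d2_eq_0_if_fibrewise_const:
  assumes "q \<in> A" "f differentiable (at q)" "\<And>r. r \<in> A \<Longrightarrow> f r = h (fst r)"
  shows "d2 F eps m f q = 0"
  using vd_eq_0_if_fibrewise_const[OF open_A assms] by (simp add: d2_def)

lemma d2_function_of_main_scalar_and_d2_eq_0:
  fixes K :: "real \<times> real \<Rightarrow> real"
  assumes T: "T_condition A F eps m" and smooth_phi: "smooth_on A \<phi>"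
    and q: "q \<in> A" and d2_d2: "d2 F eps m (d2 F eps m \<phi>) q = 0"
    and K: "K differentiable (at (main_scalar F m q, d2 F eps m \<phi> q))"
    and h: "\<And>r. r \<in> A \<Longrightarrow> h r = K (main_scalar F m r, d2 F eps m \<phi> r)"
  shows "d2 F eps m h q = 0"
proof (rule d2_compose_pair_eq_0[OF q differentiable_main_scalar[OF q]
      d2_differentiable[OF smooth_phi q] K h _ d2_d2])
  show "d2 F eps m (main_scalar F m) q = 0"
    using T q by (simp add: T_condition_def)
qed

lemma T_condition_cc_if_d2_d2_eq_0:
  assumes T: "T_condition A F eps m" and cc: "conformal_change A F eps m \<phi>"
    and d2_d2: "\<And>q. q \<in> A \<Longrightarrow> d2 F eps m (d2 F eps m \<phi>) q = 0"
  shows "T_condition_cc A F eps m \<phi>"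
  unfolding T_condition_cc_def
proof
  fix p
  assume p: "p \<in> A"
  define I where "I = main_scalar F m"
  define H where "H = d2 F eps m \<phi>"
  define R where "R = (\<lambda>z::real \<times> real. eps / (eps * fst z * snd z + (snd z)\<^sup>2 + eps))"
  have smooth_phi: "smooth_on A \<phi>"
    using cc by (simp add: conformal_change_def)
  have rho_eq: "eps * rho_cc F eps m \<phi> q = R (I q, H q)" if "q \<in> A" for q
    using eps_rho_cc_eq[OF d2_d2[OF that]] by (simp add: R_def I_def H_def)
  have R_pos: "R (I q, H q) > 0" if "q \<in> A" for q
    unfolding rho_eq[OF that, symmetric] using cc that by (simp add: conformal_change_def)
  have R_diff: "R differentiable (at (I q, H q))" if "q \<in> A" for q
  proof -
    \<comment> \<open>A vanishing denominator would give \<open>R (I q, H q) = 0\<close>, as \<open>x / 0 = 0\<close>.\<close>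
    have "eps * I q * H q + (H q)\<^sup>2 + eps \<noteq> 0"
      using R_pos[OF that] by (auto simp: R_def)
    then show ?thesis
      unfolding R_def
      by (intro derivative_intros bounded_linear_imp_differentiable bounded_linear_fst
          bounded_linear_snd) simp
  qed
  have "d2 F eps m (\<lambda>q. ln (eps * rho_cc F eps m \<phi> q)) q = 0" if "q \<in> A" for q
    by (rule d2_function_of_main_scalar_and_d2_eq_0[OF T smooth_phi that d2_d2[OF that],
          where K = "\<lambda>z. ln (R z)"])
      (simp_all add: rho_eq I_def H_def
        differentiable_ln_at[OF R_diff[OF that] R_pos[OF that], unfolded I_def H_def])
  then have main_scalar_cc_eq:
    "main_scalar_cc F eps m \<phi> q = sqrt (R (I q, H q)) * (I q + 2 * eps * H q)" if "q \<in> A" for q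
    using that rho_eq[OF that] by (simp add: main_scalar_cc_def I_def H_def)
  show "d2 F eps m (main_scalar_cc F eps m \<phi>) p = 0"
    by (rule d2_function_of_main_scalar_and_d2_eq_0[OF T smooth_phi p d2_d2[OF p],
          where K = "\<lambda>z. sqrt (R z) * (fst z + 2 * eps * snd z)"])
      (simp_all add: main_scalar_cc_eq I_def H_def
        differentiable_sqrt_at[OF R_diff[OF p] R_pos[OF p], unfolded I_def H_def]
        bounded_linear_imp_differentiable bounded_linear_fst bounded_linear_snd)
qed

lemma T_condition_cc_iff_d2_d2_eq_0:
  assumes T: "T_condition A F eps m" and smooth_phi: "smooth_on A \<phi>"
    and sigma: "\<And>q. q \<in> A \<Longrightarrow> sigma_cc F eps m \<phi> q = (d2 F eps m \<phi> q)\<^sup>2"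
  shows "T_condition_cc A F eps m \<phi> \<longleftrightarrow> (\<forall>p\<in>A. d2 F eps m (d2 F eps m \<phi>) p = 0)"
proof -
  have rho: "eps * rho_cc F eps m \<phi> q = 1" if "q \<in> A" for q
    using sigma[OF that] eps_nonzero by (simp add: rho_cc_def)
  have "d2 F eps m (\<lambda>q. ln (eps * rho_cc F eps m \<phi> q)) q = 0" if "q \<in> A" for q
    using vd_transform_within_open[of "\<lambda>_. 0" q A "\<lambda>q. ln (eps * rho_cc F eps m \<phi> q)",
        OF differentiable_const open_A that] rho
    by (simp add: d2_def vd_def)
  then have main_scalar_cc_eq:
    "main_scalar_cc F eps m \<phi> q = 1 * main_scalar F m q + 2 * eps * d2 F eps m \<phi> q"
    if "q \<in> A" for q
    using that rho[OF that] by (simp add: main_scalar_cc_def)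
  have "d2 F eps m (main_scalar_cc F eps m \<phi>) p = 2 * eps * d2 F eps m (d2 F eps m \<phi>) p"
    if "p \<in> A" for p
    using d2_linear_combination[OF that differentiable_main_scalar[OF that]
        d2_differentiable[OF smooth_phi that] main_scalar_cc_eq] T that
    by (simp add: T_condition_def)
  then show ?thesis
    using eps_nonzero by (auto simp: T_condition_cc_def)
qed

end

theorem proposition4p2:
  fixes U :: "(real^2) set" and A :: "pt set" and F \<phi> :: "pt \<Rightarrow> real"
    and eps :: real and m :: "pt \<Rightarrow> real^2"
  assumes "pseudo_finsler U A F"
    and "berwald_frame A F eps m"
    and "T_condition A F eps m"
    and "conformal_change A F eps m \<phi>"
  shows "((\<exists>h :: real^2 \<Rightarrow> real. \<forall>p\<in>A. d2 F eps m \<phi> p = h (fst p))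
            \<longrightarrow> T_condition_cc A F eps m \<phi>)
       \<and> ((\<forall>p\<in>A. sigma_cc F eps m \<phi> p = (d2 F eps m \<phi> p)\<^sup>2)
            \<longrightarrow> (T_condition_cc A F eps m \<phi> \<longleftrightarrow>
                 (\<forall>p\<in>A. d2 F eps m (d2 F eps m \<phi>) p = 0)))"
proof -
  interpret berwald_surface U A F eps m
    using assms(1,2) by unfold_locales
  have smooth_phi: "smooth_on A \<phi>"
    using assms(4) by (simp add: conformal_change_def)
  have "\<forall>p\<in>A. d2 F eps m (d2 F eps m \<phi>) p = 0"
    if "\<forall>p\<in>A. d2 F eps m \<phi> p = h (fst p)" for h
    using d2_eq_0_if_fibrewise_const[OF _ d2_differentiable[OF smooth_phi]] that by blast
  then show ?thesis
    using T_condition_cc_if_d2_d2_eq_0[OF assms(3,4)]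
      T_condition_cc_iff_d2_d2_eq_0[OF assms(3) smooth_phi] by blast
qed

end
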